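(* For every finite set $C$ of level constraints and every level substitution $\theta$: $\theta \vDash C$ if and only if $\theta \vDash \widehat{C}$, where $\widehat{C}$ is obtained by applying the constraint-normalization procedure (described in the context) to every constraint of $C$.
   Context: Level expressions: $l ::= i \mid \mathtt{z} \mid \mathtt{s}\,l \mid l \sqcup l'$, with $i$ in an infinite set $\mathcal{I}$ of level variables equipped with a total order $<$. $\simeq$ is the smallest congruence on level expressions (closed under the constructors and under substitution of levels for level variables) containing $i_1 \sqcup (i_2 \sqcup i_3) \approx (i_1 \sqcup i_2) \sqcup i_3$, $i_1 \sqcup i_2 \approx i_2 \sqcup i_1$, $\mathtt{s}(i_1 \sqcup i_2) \approx \mathtt{s}\,i_1 \sqcup \mathtt{s}\,i_2$, $i \sqcup \mathtt{s}\,i \approx \mathtt{s}\,i$, $i \sqcup \mathtt{z} \approx i$, $i \sqcup i \approx i$. $\mathtt{s}^k l$ is $k$-fold application of $\mathtt{s}$. For a strictly increasing sequence $V = i_1, \dots, i_k$ of level variables and levels $l_{i}$, $\sqcup_{i \in V} l_i$ denotes $l_{i_1} \sqcup (l_{i_2} \sqcup \dots (l_{i_{k-1}} \sqcup l_{i_k})\dots)$. A level is in normal form if it has the form $\mathtt{s}^k\,\mathtt{z} \sqcup (\sqcup_{i \in V} \mathtt{s}^{n_i}\,i)$ with $n_i \le k$ for all $i \in V$; every level $l$ has a unique normal form $\hat{l}$ with $l \simeq \hat{l}$. A constraint is a pair $l_1 = l_2$; for a level substitution $\theta$ and a set of constraints $C$, $\theta \vDash C$ means $l_1\theta \simeq l_2\theta$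 for all $l_1 = l_2 \in C$. The normalization procedure on a constraint $l_1 = l_2$: first replace $l_1, l_2$ by $\hat{l_1}, \hat{l_2}$, written $l_p = \mathtt{s}^{k_p}\,\mathtt{z} \sqcup (\sqcup_{i \in V_p} \mathtt{s}^{n^p_i}\,i)$ for $p = 1,2$; then for each $i \in V_1 \cap V_2$: if $n^1_i < n^2_i$ remove the summand $\mathtt{s}^{n^1_i}\,i$ from $l_1$, and if $n^1_i > n^2_i$ remove the summand $\mathtt{s}^{n^2_i}\,i$ from $l_2$; finally subtract the minimum of the set $\{k_1, k_2\} \cup \{n^1_i\}_{i \in V_1} \cup \{n^2_i\}_{i \in V_2}$ (for the current $V_1, V_2$) from all these exponents. *)

theory Defs
  imports Main
begin

datatype 'v lvl = LVar 'v | Z | S "'v lvl" | Max "'v lvl" "'v lvl"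

fun subst :: "('v \<Rightarrow> 'v lvl) \<Rightarrow> 'v lvl \<Rightarrow> 'v lvl" where
  "subst \<theta> (LVar i) = \<theta> i"
| "subst \<theta> Z = Z"
| "subst \<theta> (S l) = S (subst \<theta> l)"
| "subst \<theta> (Max l l') = Max (subst \<theta> l) (subst \<theta> l')"

text \<open>The congruence: smallest congruence containing all substitution instances of the axioms
  (equivalently, closed under constructors and substitution).\<close>
inductive lvl_eq :: "'v lvl \<Rightarrow> 'v lvl \<Rightarrow> bool" (infix "\<simeq>" 50) where
  refl: "l \<simeq> l"
| sym: "l1 \<simeq> l2 \<Longrightarrow> l2 \<simeq> l1"
| trans: "l1 \<simeq> l2 \<Longrightarrow> l2 \<simeq> l3 \<Longrightarrow> l1 \<simeq> l3"
| congS: "l1 \<simeq> l2 \<Longrightarrow> S l1 \<simeq> S l2"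
| congMax: "l1 \<simeq> l2 \<Longrightarrow> l1' \<simeq> l2' \<Longrightarrow> Max l1 l1' \<simeq> Max l2 l2'"
| assoc: "Max l1 (Max l2 l3) \<simeq> Max (Max l1 l2) l3"
| comm: "Max l1 l2 \<simeq> Max l2 l1"
| distS: "S (Max l1 l2) \<simeq> Max (S l1) (S l2)"
| absS: "Max l (S l) \<simeq> S l"
| unitZ: "Max l Z \<simeq> l"
| idem: "Max l l \<simeq> l"

definition Spow :: "nat \<Rightarrow> 'v lvl \<Rightarrow> 'v lvl" where
  "Spow k l = (S ^^ k) l"

fun bigmax :: "('v \<times> nat) list \<Rightarrow> 'v lvl" where
  "bigmax [] = Z"
| "bigmax [(i, n)] = Spow n (LVar i)"
| "bigmax ((i, n) # xs) = Max (Spow n (LVar i)) (bigmax xs)"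

definition to_level :: "nat \<Rightarrow> ('v \<times> nat) list \<Rightarrow> 'v lvl" where
  "to_level k xs = (if xs = [] then Spow k Z else Max (Spow k Z) (bigmax xs))"

definition nf_data :: "nat \<Rightarrow> ('v::linorder \<times> nat) list \<Rightarrow> bool" where
  "nf_data k xs \<longleftrightarrow> sorted_wrt (<) (map fst xs) \<and> (\<forall>(i, n) \<in> set xs. n \<le> k)"

definition is_nf :: "'v::linorder lvl \<Rightarrow> bool" where
  "is_nf l \<longleftrightarrow> (\<exists>k xs. nf_data k xs \<and> l = to_level k xs)"

text \<open>Normal-form data of a level (unique, as stated in the paper).\<close>
definition nf_rep :: "'v::linorder lvl \<Rightarrow> nat \<times> ('v \<times> nat) list" where
  "nf_rep l = (THE p. nf_data (fst p) (snd p) \<and> l \<simeq> to_level (fst p) (snd p))"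

definition nf :: "'v::linorder lvl \<Rightarrow> 'v lvl" where
  "nf l = (THE l'. is_nf l' \<and> l \<simeq> l')"

type_synonym 'v constr = "'v lvl \<times> 'v lvl"

definition norm_constr :: "'v::linorder constr \<Rightarrow> 'v constr" where
  "norm_constr c = (let
     (k1, xs1) = nf_rep (fst c); (k2, xs2) = nf_rep (snd c);
     ys1 = filter (\<lambda>(i, n). \<not> (\<exists>n2. (i, n2) \<in> set xs2 \<and> n < n2)) xs1;
     ys2 = filter (\<lambda>(i, n). \<not> (\<exists>n1. (i, n1) \<in> set xs1 \<and> n < n1)) xs2;
     m = Min ({k1, k2} \<union> snd ` set ys1 \<union> snd ` set ys2);
     zs1 = map (\<lambda>(i, n). (i, n - m)) ys1;
     zs2 = map (\<lambda>(i, n). (i, n - m)) ys2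
   in (to_level (k1 - m) zs1, to_level (k2 - m) zs2))"

definition sat :: "('v \<Rightarrow> 'v lvl) \<Rightarrow> 'v constr set \<Rightarrow> bool" (infix "\<Turnstile>" 50) where
  "\<theta> \<Turnstile> C \<longleftrightarrow> (\<forall>(l1, l2) \<in> C. subst \<theta> l1 \<simeq> subst \<theta> l2)"

definition norm_constrs :: "'v::linorder constr set \<Rightarrow> 'v constr set" where
  "norm_constrs C = norm_constr ` C"

end

theory Submission
  imports Defs
begin

text \<open>Interpret levels in \<open>\<nat>\<close>: variables by a valuation, \<open>s\<close> as successor, \<open>\<squnion>\<close> as \<open>max\<close>.
  The congruence is sound for this semantics, and every level is provably congruent to a
  normal form: flatten it into a join of atoms \<open>s\<^sup>n i\<close> and \<open>s\<^sup>n z\<close>, and let the largest atom of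
  each kind absorb the others. A normal form is determined by its semantics: the valuation that
  is \<open>0\<close> everywhere yields \<open>k\<close>, and the one that lifts a single variable \<open>i\<close> to \<open>k + 1\<close>
  yields \<open>k + 1 + n\<^sub>i\<close> or \<open>k\<close>, depending on whether \<open>i \<in> V\<close>. Hence two levels are congruent
  iff they agree under all valuations, and substitution instances may be compared in \<open>\<nat>\<close> too.

  There, normalizing a constraint is harmless: a summand removed from one side lies strictly below
  a summand of the same variable that is kept on the other side, so it can only matter when the
  two sides differ anyway; and subtracting a common exponent shifts both maxima equally.\<close>

fun lvl_eval :: "('v \<Rightarrow> nat) \<Rightarrow> 'v lvl \<Rightarrow> nat" where
  "lvl_eval \<rho> (LVar i) = \<rho> i"
| "lvl_eval \<rho> Z = 0"
| "lvl_eval \<rho> (S l) = Suc (lvl_eval \<rho> l)"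
| "lvl_eval \<rho> (Max l l') = max (lvl_eval \<rho> l) (lvl_eval \<rho> l')"

lemma lvl_eq_imp_eval_eq: "l1 \<simeq> l2 \<Longrightarrow> lvl_eval \<rho> l1 = lvl_eval \<rho> l2"
  by (induction rule: lvl_eq.induct) auto

lemma lvl_eval_subst: "lvl_eval \<rho> (subst \<theta> l) = lvl_eval (\<lambda>i. lvl_eval \<rho> (\<theta> i)) l"
  by (induction l) auto

lemma Spow_0 [simp]: "Spow 0 l = l"
  by (simp add: Spow_def)

lemma Spow_Suc: "Spow (Suc n) l = S (Spow n l)"
  by (simp add: Spow_def)

lemma Spow_add: "Spow (m + n) l = Spow m (Spow n l)"
  by (simp add: Spow_def funpow_add)

lemma lvl_eval_Spow: "lvl_eval \<rho> (Spow n l) = lvl_eval \<rho> l + n"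
  by (induction n) (auto simp: Spow_Suc)

lemma lvl_eval_bigmax:
  "xs \<noteq> [] \<Longrightarrow> lvl_eval \<rho> (bigmax xs) = Lattices_Big.Max ((\<lambda>(i, n). \<rho> i + n) ` set xs)"
  by (induction xs rule: bigmax.induct) (auto simp: lvl_eval_Spow)

lemma lvl_eval_to_level:
  "lvl_eval \<rho> (to_level k xs) = Lattices_Big.Max (insert k ((\<lambda>(i, n). \<rho> i + n) ` set xs))"
  by (auto simp: to_level_def lvl_eval_Spow lvl_eval_bigmax)

lemmas [trans] = lvl_eq.trans

lemma lvl_eq_Max_left: "a \<simeq> b \<Longrightarrow> Max a c \<simeq> Max b c"
  by (simp add: lvl_eq.congMax lvl_eq.refl)

lemma lvl_eq_Max_right: "a \<simeq> b \<Longrightarrow> Max c a \<simeq> Max c b"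
  by (simp add: lvl_eq.congMax lvl_eq.refl)

lemma lvl_eq_Z_Max: "Max Z l \<simeq> l"
  by (meson lvl_eq.comm lvl_eq.trans lvl_eq.unitZ)

lemma lvl_eq_assoc_right: "Max (Max a b) c \<simeq> Max a (Max b c)"
  by (simp add: lvl_eq.assoc lvl_eq.sym)

lemma lvl_eq_Spow: "a \<simeq> b \<Longrightarrow> Spow n a \<simeq> Spow n b"
  by (induction n) (auto simp: Spow_Suc intro: lvl_eq.congS)

lemma Spow_Max: "Spow n (Max a b) \<simeq> Max (Spow n a) (Spow n b)"
proof (induction n)
  case 0
  show ?case by (simp add: lvl_eq.refl)
next
  case (Suc n)
  have "S (Spow n (Max a b)) \<simeq> S (Max (Spow n a) (Spow n b))" by (rule lvl_eq.congS[OF Suc])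
  also have "\<dots> \<simeq> Max (S (Spow n a)) (S (Spow n b))" by (rule lvl_eq.distS)
  finally show ?case by (simp add: Spow_Suc)
qed

lemma Max_Spow_absorb: "Max l (Spow d l) \<simeq> Spow d l"
proof (induction d)
  case 0
  show ?case by (simp add: lvl_eq.idem)
next
  case (Suc d)
  have "Max l (S (Spow d l)) \<simeq> Max l (Max (Spow d l) (S (Spow d l)))"
    by (rule lvl_eq_Max_right, rule lvl_eq.sym, rule lvl_eq.absS)
  also have "\<dots> \<simeq> Max (Max l (Spow d l)) (S (Spow d l))" by (rule lvl_eq.assoc)
  also have "\<dots> \<simeq> Max (Spow d l) (S (Spow d l))" by (rule lvl_eq_Max_left[OF Suc])
  also have "\<dots> \<simeq> S (Spow d l)" by (rule lvl_eq.absS)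
  finally show ?case by (simp add: Spow_Suc)
qed

lemma Max_Spow_Spow_absorb: "n \<le> m \<Longrightarrow> Max (Spow n l) (Spow m l) \<simeq> Spow m l"
  using Max_Spow_absorb[of "Spow n l" "m - n"] by (simp flip: Spow_add)

lemma Max_Spow_Z_absorb: "n \<le> m \<Longrightarrow> Max (Spow n Z) (Spow m l) \<simeq> Spow m l"
proof -
  assume "n \<le> m"
  then have split: "Spow m l = Spow n (Spow (m - n) l)" by (simp flip: Spow_add)
  have "Max (Spow n Z) (Spow n (Spow (m - n) l)) \<simeq> Spow n (Max Z (Spow (m - n) l))"
    by (rule lvl_eq.sym, rule Spow_Max)
  also have "\<dots> \<simeq> Spow n (Spow (m - n) l)" by (rule lvl_eq_Spow, rule lvl_eq_Z_Max)
  finally show ?thesis unfolding split .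
qed

type_synonym 'v atom = "'v option \<times> nat"

fun atom_lvl :: "'v atom \<Rightarrow> 'v lvl" where
  "atom_lvl (None, n) = Spow n Z"
| "atom_lvl (Some i, n) = Spow n (LVar i)"

definition atom_le :: "'v atom \<Rightarrow> 'v atom \<Rightarrow> bool" where
  "atom_le a b \<longleftrightarrow> snd a \<le> snd b \<and> (fst a = None \<or> fst a = fst b)"

lemma Max_atom_lvl_absorb: "atom_le a b \<Longrightarrow> Max (atom_lvl a) (atom_lvl b) \<simeq> atom_lvl b"
  by (cases a; cases b; cases "fst a"; cases "fst b")
    (auto simp: atom_le_def Max_Spow_Spow_absorb Max_Spow_Z_absorb)

lemma atom_lvl_Suc: "atom_lvl (x, Suc n) = S (atom_lvl (x, n))"
  by (cases x) (auto simp: Spow_Suc)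

fun join :: "'v lvl list \<Rightarrow> 'v lvl" where
  "join [] = Z"
| "join (l # ls) = Max l (join ls)"

lemma join_append: "join (ls @ ls') \<simeq> Max (join ls) (join ls')"
proof (induction ls)
  case Nil
  show ?case by (simp add: lvl_eq_Z_Max lvl_eq.sym)
next
  case (Cons l ls)
  have "Max l (join (ls @ ls')) \<simeq> Max l (Max (join ls) (join ls'))" by (rule lvl_eq_Max_right[OF Cons])
  also have "\<dots> \<simeq> Max (Max l (join ls)) (join ls')" by (rule lvl_eq.assoc)
  finally show ?case by simp
qed

lemma S_join: "ls \<noteq> [] \<Longrightarrow> S (join ls) \<simeq> join (map S ls)"
proof (induction ls)
  case Nil
  then show ?case by simp
next
  case (Cons l ls)
  show ?case
  proof (cases "ls = []")
    case True
    have "S (Max l Z) \<simeq> S l" by (rule lvl_eq.congS, rule lvl_eq.unitZ)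
    also have "\<dots> \<simeq> Max (S l) Z" by (rule lvl_eq.sym, rule lvl_eq.unitZ)
    finally show ?thesis using True by simp
  next
    case False
    have "S (Max l (join ls)) \<simeq> Max (S l) (S (join ls))" by (rule lvl_eq.distS)
    also have "\<dots> \<simeq> Max (S l) (join (map S ls))" by (rule lvl_eq_Max_right, rule Cons.IH[OF False])
    finally show ?thesis by simp
  qed
qed

lemma Max_join_absorb: "l' \<in> set ls \<Longrightarrow> Max l l' \<simeq> l' \<Longrightarrow> Max l (join ls) \<simeq> join ls"
proof (induction ls)
  case Nil
  then show ?case by simp
next
  case (Cons l'' ls)
  have "Max l (Max l'' (join ls)) \<simeq> Max (Max l l'') (join ls)" by (rule lvl_eq.assoc)
  also have "\<dots> \<simeq> Max l'' (join ls)"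
  proof (cases "l' = l''")
    case True
    then show ?thesis using Cons.prems(2) by (rule_tac lvl_eq_Max_left) simp
  next
    case False
    then have "l' \<in> set ls" using Cons.prems(1) by simp
    have "Max (Max l l'') (join ls) \<simeq> Max (Max l'' l) (join ls)" by (rule lvl_eq_Max_left, rule lvl_eq.comm)
    also have "\<dots> \<simeq> Max l'' (Max l (join ls))" by (rule lvl_eq_assoc_right)
    also have "\<dots> \<simeq> Max l'' (join ls)"
      by (rule lvl_eq_Max_right, rule Cons.IH[OF \<open>l' \<in> set ls\<close> Cons.prems(2)])
    finally show ?thesis .
  qed
  finally show ?case by simp
qed

lemma Max_join_join_absorb:
  "\<forall>l\<in>set ls. \<exists>l'\<in>set ls'. Max l l' \<simeq> l' \<Longrightarrow> Max (join ls) (join ls') \<simeq> join ls'"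
proof (induction ls)
  case Nil
  then show ?case by (simp add: lvl_eq_Z_Max)
next
  case (Cons l ls)
  then obtain l' where l': "l' \<in> set ls'" "Max l l' \<simeq> l'" by auto
  have "Max (Max l (join ls)) (join ls') \<simeq> Max l (Max (join ls) (join ls'))" by (rule lvl_eq_assoc_right)
  also have "\<dots> \<simeq> Max l (join ls')" by (rule lvl_eq_Max_right, use Cons in simp)
  also have "\<dots> \<simeq> join ls'" by (rule Max_join_absorb[OF l'])
  finally show ?case by simp
qed

lemma join_eq_if_mutually_absorbed:
  assumes "\<forall>l\<in>set ls. \<exists>l'\<in>set ls'. Max l l' \<simeq> l'" and "\<forall>l'\<in>set ls'. \<exists>l\<in>set ls. Max l' l \<simeq> l"
  shows "join ls \<simeq> join ls'"
proof -
  have "join ls \<simeq> Max (join ls') (join ls)" by (rule lvl_eq.sym, rule Max_join_join_absorb[OF assms(2)])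
  also have "\<dots> \<simeq> Max (join ls) (join ls')" by (rule lvl_eq.comm)
  also have "\<dots> \<simeq> join ls'" by (rule Max_join_join_absorb[OF assms(1)])
  finally show ?thesis .
qed

lemma join_atoms_eq_if_mutually_bounded:
  "\<forall>a\<in>set as. \<exists>b\<in>set bs. atom_le a b \<Longrightarrow> \<forall>b\<in>set bs. \<exists>a\<in>set as. atom_le b a
   \<Longrightarrow> join (map atom_lvl as) \<simeq> join (map atom_lvl bs)"
  by (rule join_eq_if_mutually_absorbed) (use Max_atom_lvl_absorb in fastforce)+

fun atoms :: "'v lvl \<Rightarrow> 'v atom list" where
  "atoms (LVar i) = [(Some i, 0)]"
| "atoms Z = [(None, 0)]"
| "atoms (S l) = map (\<lambda>(x, n). (x, Suc n)) (atoms l)"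
| "atoms (Max l l') = atoms l @ atoms l'"

lemma atoms_not_Nil: "atoms l \<noteq> []"
  by (induction l) auto

lemma lvl_eq_join_atoms: "l \<simeq> join (map atom_lvl (atoms l))"
proof (induction l)
  case (LVar i)
  show ?case by (simp add: lvl_eq.sym lvl_eq.unitZ)
next
  case Z
  show ?case by (simp add: lvl_eq.sym lvl_eq.unitZ)
next
  case (S l)
  have "S l \<simeq> S (join (map atom_lvl (atoms l)))" by (rule lvl_eq.congS[OF S])
  also have "\<dots> \<simeq> join (map S (map atom_lvl (atoms l)))" by (rule S_join) (simp add: atoms_not_Nil)
  finally show ?case by (simp add: comp_def case_prod_beta atom_lvl_Suc)
next
  case (Max l l')
  have "Max l l' \<simeq> Max (join (map atom_lvl (atoms l))) (join (map atom_lvl (atoms l')))"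
    by (rule lvl_eq.congMax[OF Max.IH])
  also have "\<dots> \<simeq> join (map atom_lvl (atoms l) @ map atom_lvl (atoms l'))"
    by (rule lvl_eq.sym, rule join_append)
  finally show ?case by simp
qed

lemma bigmax_eq_join: "xs \<noteq> [] \<Longrightarrow> bigmax xs \<simeq> join (map atom_lvl (map (\<lambda>(i, n). (Some i, n)) xs))"
proof (induction xs rule: bigmax.induct)
  case 1
  then show ?case by simp
next
  case (2 i n)
  show ?case by (simp add: lvl_eq.sym lvl_eq.unitZ)
next
  case (3 i n v vs)
  then show ?case by (simp add: lvl_eq_Max_right)
qed

lemma to_level_eq_join:
  "to_level k xs \<simeq> join (map atom_lvl ((None, k) # map (\<lambda>(i, n). (Some i, n)) xs))"
proof (cases "xs = []")
  case True
  then show ?thesis by (simp add: to_level_def lvl_eq.sym lvl_eq.unitZ)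
next
  case False
  then show ?thesis
    using lvl_eq_Max_right[OF bigmax_eq_join[OF False], of "Spow k Z"] by (simp add: to_level_def)
qed

definition atom_vars :: "'v atom list \<Rightarrow> 'v set" where
  "atom_vars as = {i. \<exists>n. (Some i, n) \<in> set as}"

definition atom_top :: "'v atom list \<Rightarrow> 'v \<Rightarrow> nat" where
  "atom_top as i = Lattices_Big.Max {n. (Some i, n) \<in> set as}"

definition nf_of_atoms :: "'v::linorder atom list \<Rightarrow> nat \<times> ('v \<times> nat) list" where
  "nf_of_atoms as = (Lattices_Big.Max (snd ` set as),
     map (\<lambda>i. (i, atom_top as i)) (sorted_list_of_set (atom_vars as)))"

lemma finite_atom_vars: "finite (atom_vars as)"
  unfolding atom_vars_def by (rule finite_subset[of _ "(the \<circ> fst) ` set as"]) force+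

lemma finite_atom_exponents: "finite {n. (Some i, n) \<in> set as}"
  by (rule finite_subset[of _ "snd ` set as"]) force+

lemma atom_top_mem: "i \<in> atom_vars as \<Longrightarrow> (Some i, atom_top as i) \<in> set as"
  using Max_in[OF finite_atom_exponents, of i as] by (auto simp: atom_vars_def atom_top_def)

lemma atom_top_ge: "(Some i, n) \<in> set as \<Longrightarrow> n \<le> atom_top as i"
  unfolding atom_top_def by (rule Max_ge[OF finite_atom_exponents]) simp

lemma atom_exponent_le_Max: "(x, n) \<in> set as \<Longrightarrow> n \<le> Lattices_Big.Max (snd ` set as)"
  by (rule Max_ge) force+

lemma set_nf_of_atoms:
  "nf_of_atoms as = (k, xs) \<Longrightarrow> set xs = (\<lambda>i. (i, atom_top as i)) ` atom_vars as"
  by (auto simp: nf_of_atoms_def finite_atom_vars)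

lemma nf_data_nf_of_atoms: "nf_of_atoms as = (k, xs) \<Longrightarrow> nf_data k xs"
  unfolding nf_data_def
proof
  assume nf: "nf_of_atoms as = (k, xs)"
  then show "sorted_wrt (<) (map fst xs)"
    by (auto simp: nf_of_atoms_def comp_def)
  have "atom_top as i \<le> k" if "i \<in> atom_vars as" for i
    using nf atom_exponent_le_Max[OF atom_top_mem[OF that]] by (simp add: nf_of_atoms_def)
  then show "\<forall>(i, n)\<in>set xs. n \<le> k"
    using set_nf_of_atoms[OF nf] by auto
qed

lemma join_atoms_eq_nf_of_atoms:
  assumes "as \<noteq> []" and nf: "nf_of_atoms as = (k, xs)"
  shows "join (map atom_lvl as) \<simeq> to_level k xs"
proof -
  let ?bs = "(None, k) # map (\<lambda>(i, n). (Some i, n)) xs"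
  have set_bs: "set ?bs = insert (None, k) ((\<lambda>i. (Some i, atom_top as i)) ` atom_vars as)"
    using set_nf_of_atoms[OF nf] by auto
  have k: "k = Lattices_Big.Max (snd ` set as)"
    using nf by (simp add: nf_of_atoms_def)
  have "join (map atom_lvl as) \<simeq> join (map atom_lvl ?bs)"
  proof (rule join_atoms_eq_if_mutually_bounded)
    show "\<forall>a\<in>set as. \<exists>b\<in>set ?bs. atom_le a b"
    proof
      fix a assume a: "a \<in> set as"
      show "\<exists>b\<in>set ?bs. atom_le a b"
      proof (cases a)
        case (Pair x n)
        show ?thesis
        proof (cases x)
          case None
          then show ?thesis using a Pair k atom_exponent_le_Max by (auto simp: set_bs atom_le_def)
        next
          case (Some i)
          then have "i \<in> atom_vars as" using a Pair by (auto simp: atom_vars_def)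
          then have "(Some i, atom_top as i) \<in> set ?bs" unfolding set_bs by blast
          moreover have "atom_le a (Some i, atom_top as i)"
            using a Pair Some by (simp add: atom_le_def atom_top_ge)
          ultimately show ?thesis ..
        qed
      qed
    qed
    have "k \<in> snd ` set as"
      unfolding k using \<open>as \<noteq> []\<close> by (intro Max_in) auto
    then have "\<exists>a\<in>set as. atom_le (None, k) a"
      by (force simp: atom_le_def)
    moreover have "\<exists>a\<in>set as. atom_le (Some i, atom_top as i) a" if "i \<in> atom_vars as" for i
      using atom_top_mem[OF that] by (force simp: atom_le_def)
    ultimately show "\<forall>b\<in>set ?bs. \<exists>a\<in>set as. atom_le b a"
      unfolding set_bs by blast
  qed
  also have "\<dots> \<simeq> to_level k xs" by (rule lvl_eq.sym, rule to_level_eq_join)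
  finally show ?thesis .
qed

lemma nf_data_exists: "\<exists>k xs. nf_data k xs \<and> l \<simeq> to_level k xs"
proof -
  obtain k xs where nf: "nf_of_atoms (atoms l) = (k, xs)" by (metis surj_pair)
  have "l \<simeq> join (map atom_lvl (atoms l))" by (rule lvl_eq_join_atoms)
  also have "\<dots> \<simeq> to_level k xs" by (rule join_atoms_eq_nf_of_atoms[OF atoms_not_Nil nf])
  finally show ?thesis using nf_data_nf_of_atoms[OF nf] by blast
qed

lemma nf_data_exponent_unique:
  "nf_data k xs \<Longrightarrow> (i, n) \<in> set xs \<Longrightarrow> (i, n') \<in> set xs \<Longrightarrow> n = n'"
  unfolding nf_data_def strict_sorted_iff distinct_map by (metis fst_conv inj_onD prod.inject)

lemma nf_data_exponent_le: "nf_data k xs \<Longrightarrow> (i, n) \<in> set xs \<Longrightarrow> n \<le> k"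
  unfolding nf_data_def by blast

lemma lvl_eval_zero_to_level: "nf_data k xs \<Longrightarrow> lvl_eval (\<lambda>_. 0) (to_level k xs) = k"
  unfolding lvl_eval_to_level by (rule Max_eqI) (auto dest: nf_data_exponent_le)

lemma lvl_eval_spike_to_level_mem:
  assumes "nf_data k xs" and "(i, n) \<in> set xs"
  shows "lvl_eval (\<lambda>j. if j = i then Suc k else 0) (to_level k xs) = Suc k + n"
  unfolding lvl_eval_to_level
proof (rule Max_eqI)
  show "Suc k + n \<in> insert k ((\<lambda>(j, m). (if j = i then Suc k else 0) + m) ` set xs)"
    using assms(2) by force
  fix y assume "y \<in> insert k ((\<lambda>(j, m). (if j = i then Suc k else 0) + m) ` set xs)"
  then show "y \<le> Suc k + n"
    using nf_data_exponent_le[OF assms(1)] nf_data_exponent_unique[OF assms] by fastforce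
qed simp

lemma lvl_eval_spike_to_level_not_mem:
  assumes "nf_data k xs" and "i \<notin> fst ` set xs"
  shows "lvl_eval (\<lambda>j. if j = i then Suc k else 0) (to_level k xs) = k"
  unfolding lvl_eval_to_level
  using assms by (intro Max_eqI) (force dest: nf_data_exponent_le)+

lemma nf_data_subset_if_eval_eq:
  assumes "nf_data k xs" "nf_data k ys"
    and "\<forall>\<rho>. lvl_eval \<rho> (to_level k xs) = lvl_eval \<rho> (to_level k ys)"
  shows "set xs \<subseteq> set ys"
proof
  fix p assume "p \<in> set xs"
  moreover obtain i n where "p = (i, n)" by fastforce
  ultimately have p: "p = (i, n)" "(i, n) \<in> set xs" by auto
  let ?\<rho> = "\<lambda>j. if j = i then Suc k else 0"
  have eval_ys: "lvl_eval ?\<rho> (to_level k ys) = Suc k + n"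
    using assms(3) lvl_eval_spike_to_level_mem[OF assms(1) p(2)] by simp
  show "p \<in> set ys"
  proof (cases "i \<in> fst ` set ys")
    case True
    then obtain n' where n': "(i, n') \<in> set ys" by force
    then have "lvl_eval ?\<rho> (to_level k ys) = Suc k + n'"
      by (rule lvl_eval_spike_to_level_mem[OF assms(2)])
    then show ?thesis using eval_ys n' p by simp
  next
    case False
    then show ?thesis using eval_ys lvl_eval_spike_to_level_not_mem[OF assms(2)] by simp
  qed
qed

lemma nf_data_unique:
  assumes "nf_data k xs" "nf_data k' ys"
    and "\<forall>\<rho>. lvl_eval \<rho> (to_level k xs) = lvl_eval \<rho> (to_level k' ys)"
  shows "k = k' \<and> xs = ys"
proof -
  have "k = k'"
    using assms lvl_eval_zero_to_level by metis
  then have "set xs = set ys"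
    using assms nf_data_subset_if_eval_eq by (metis subset_antisym)
  moreover have "distinct (map fst xs)" "distinct (map fst ys)"
    "sorted (map fst xs)" "sorted (map fst ys)"
    using assms(1,2) by (auto simp: nf_data_def strict_sorted_iff)
  ultimately have "xs = ys"
    by (intro map_sorted_distinct_set_unique[of fst]) (auto simp: distinct_map)
  with \<open>k = k'\<close> show ?thesis ..
qed

lemma nf_rep_spec:
  "nf_data (fst (nf_rep l)) (snd (nf_rep l)) \<and> l \<simeq> to_level (fst (nf_rep l)) (snd (nf_rep l))"
  unfolding nf_rep_def
proof (rule theI')
  obtain k xs where nf: "nf_data k xs" "l \<simeq> to_level k xs" using nf_data_exists by blast
  show "\<exists>!p. nf_data (fst p) (snd p) \<and> l \<simeq> to_level (fst p) (snd p)"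
  proof (rule ex1I[of _ "(k, xs)"])
    fix p assume p: "nf_data (fst p) (snd p) \<and> l \<simeq> to_level (fst p) (snd p)"
    then have "\<forall>\<rho>. lvl_eval \<rho> (to_level (fst p) (snd p)) = lvl_eval \<rho> (to_level k xs)"
      using nf(2) lvl_eq_imp_eval_eq by metis
    then show "p = (k, xs)"
      using nf_data_unique[of "fst p" "snd p" k xs] p nf(1) by (simp add: prod_eq_iff)
  qed (use nf in simp)
qed

theorem lvl_eq_iff_eval_eq: "(l :: 'v::linorder lvl) \<simeq> l' \<longleftrightarrow> (\<forall>\<rho>. lvl_eval \<rho> l = lvl_eval \<rho> l')"
proof
  assume "l \<simeq> l'"
  then show "\<forall>\<rho>. lvl_eval \<rho> l = lvl_eval \<rho> l'" using lvl_eq_imp_eval_eq by blast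
next
  assume eval_eq: "\<forall>\<rho>. lvl_eval \<rho> l = lvl_eval \<rho> l'"
  obtain k xs k' xs' where r: "nf_rep l = (k, xs)" "nf_rep l' = (k', xs')" by (metis surj_pair)
  then have nf: "nf_data k xs" "l \<simeq> to_level k xs" "nf_data k' xs'" "l' \<simeq> to_level k' xs'"
    using nf_rep_spec[of l] nf_rep_spec[of l'] by auto
  then have "to_level k xs = to_level k' xs'"
    using eval_eq nf_data_unique[OF nf(1,3)] lvl_eq_imp_eval_eq by metis
  then show "l \<simeq> l'" using nf(2,4) by (metis lvl_eq.sym lvl_eq.trans)
qed

definition prune_dominated :: "('v \<times> nat) list \<Rightarrow> ('v \<times> nat) list \<Rightarrow> ('v \<times> nat) list" where
  "prune_dominated xs ys = filter (\<lambda>(i, n). \<not> (\<exists>n'. (i, n') \<in> set ys \<and> n < n')) xs"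

lemma pruned_dominated_by_kept:
  assumes "nf_data k xs" and "(i, n) \<in> set xs" and "(i, n) \<notin> set (prune_dominated xs ys)"
  shows "\<exists>n'>n. (i, n') \<in> set (prune_dominated ys xs)"
proof -
  obtain n' where n': "(i, n') \<in> set ys" "n < n'"
    using assms(2,3) by (auto simp: prune_dominated_def)
  have "\<not> (\<exists>n''. (i, n'') \<in> set xs \<and> n' < n'')"
    using n'(2) nf_data_exponent_unique[OF assms(1,2)] by fastforce
  with n' show ?thesis by (auto simp: prune_dominated_def)
qed

lemma Max_Un_dominated:
  fixes A A' B :: "nat set"
  assumes "finite A" "A \<noteq> {}" "finite B" "finite A'" "\<forall>b\<in>B. \<exists>a\<in>A'. b < a"
  shows "Lattices_Big.Max A \<le> Lattices_Big.Max (A \<union> B)"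
    and "Lattices_Big.Max (A \<union> B) = Lattices_Big.Max A
      \<or> Lattices_Big.Max (A \<union> B) < Lattices_Big.Max A'"
proof -
  show "Lattices_Big.Max A \<le> Lattices_Big.Max (A \<union> B)"
    using assms by (simp add: Max_mono)
  have "Lattices_Big.Max (A \<union> B) \<in> A \<union> B"
    using assms by (intro Max_in) auto
  then show "Lattices_Big.Max (A \<union> B) = Lattices_Big.Max A
      \<or> Lattices_Big.Max (A \<union> B) < Lattices_Big.Max A'"
  proof
    assume "Lattices_Big.Max (A \<union> B) \<in> A"
    then show ?thesis using assms by (simp add: Max_mono antisym)
  next
    assume "Lattices_Big.Max (A \<union> B) \<in> B"
    then show ?thesis using assms by (meson Max_ge order.strict_trans2)
  qed
qed

lemma Max_Un_eq_iff_Max_eq: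
  fixes A1 A2 B1 B2 :: "nat set"
  assumes "finite A1" "finite A2" "finite B1" "finite B2" "A1 \<noteq> {}" "A2 \<noteq> {}"
    and "\<forall>b\<in>B1. \<exists>a\<in>A2. b < a" and "\<forall>b\<in>B2. \<exists>a\<in>A1. b < a"
  shows "Lattices_Big.Max (A1 \<union> B1) = Lattices_Big.Max (A2 \<union> B2)
    \<longleftrightarrow> Lattices_Big.Max A1 = Lattices_Big.Max A2"
  using Max_Un_dominated[of A1 B1 A2] Max_Un_dominated[of A2 B2 A1] assms by linarith

lemma lvl_eval_prune_dominated_iff:
  assumes "nf_data k xs" and "nf_data k' ys"
  shows "lvl_eval \<sigma> (to_level k (prune_dominated xs ys))
      = lvl_eval \<sigma> (to_level k' (prune_dominated ys xs))
    \<longleftrightarrow> lvl_eval \<sigma> (to_level k xs) = lvl_eval \<sigma> (to_level k' ys)"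
proof -
  let ?f = "\<lambda>(i, n). \<sigma> i + n" and ?p = "prune_dominated xs ys" and ?p' = "prune_dominated ys xs"
  have split: "insert k (?f ` set xs) = insert k (?f ` set ?p) \<union> ?f ` (set xs - set ?p)"
    and split': "insert k' (?f ` set ys) = insert k' (?f ` set ?p') \<union> ?f ` (set ys - set ?p')"
    by (auto simp: prune_dominated_def)
  have "\<forall>b\<in>?f ` (set xs - set ?p). \<exists>a\<in>insert k' (?f ` set ?p'). b < a"
    using pruned_dominated_by_kept[OF assms(1)] by fastforce
  moreover have "\<forall>b\<in>?f ` (set ys - set ?p'). \<exists>a\<in>insert k (?f ` set ?p). b < a"
    using pruned_dominated_by_kept[OF assms(2)] by fastforce
  ultimately show ?thesis
    unfolding lvl_eval_to_level split split' by (intro Max_Un_eq_iff_Max_eq [symmetric]) auto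
qed

lemma lvl_eval_to_level_shift:
  assumes "m \<le> k" and "\<forall>(i, n)\<in>set xs. m \<le> n"
  shows "lvl_eval \<sigma> (to_level (k - m) (map (\<lambda>(i, n). (i, n - m)) xs)) + m
    = lvl_eval \<sigma> (to_level k xs)"
proof -
  let ?f = "\<lambda>(i, n). \<sigma> i + n" and ?ys = "map (\<lambda>(i, n). (i, n - m)) xs"
  have "(\<lambda>x. x + m) ` insert (k - m) (?f ` set ?ys) = insert k (?f ` set xs)"
    using assms by (force simp: image_image)
  moreover have "lvl_eval \<sigma> (to_level (k - m) ?ys) + m
      = Lattices_Big.Max ((\<lambda>x. x + m) ` insert (k - m) (?f ` set ?ys))"
    unfolding lvl_eval_to_level by (rule mono_Max_commute) (auto simp: mono_def)
  ultimately show ?thesis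
    by (simp only: lvl_eval_to_level)
qed

lemma lvl_eval_norm_constr_iff:
  "lvl_eval \<sigma> (fst (norm_constr c)) = lvl_eval \<sigma> (snd (norm_constr c))
    \<longleftrightarrow> lvl_eval \<sigma> (fst c) = lvl_eval \<sigma> (snd c)"
proof -
  obtain k1 xs1 k2 xs2 where r: "nf_rep (fst c) = (k1, xs1)" "nf_rep (snd c) = (k2, xs2)"
    by (metis surj_pair)
  then have nf: "nf_data k1 xs1" "fst c \<simeq> to_level k1 xs1" "nf_data k2 xs2" "snd c \<simeq> to_level k2 xs2"
    using nf_rep_spec[of "fst c"] nf_rep_spec[of "snd c"] by auto
  define ys1 where "ys1 = prune_dominated xs1 xs2"
  define ys2 where "ys2 = prune_dominated xs2 xs1"
  define m where "m = Min ({k1, k2} \<union> snd ` set ys1 \<union> snd ` set ys2)"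
  have norm: "norm_constr c = (to_level (k1 - m) (map (\<lambda>(i, n). (i, n - m)) ys1),
                               to_level (k2 - m) (map (\<lambda>(i, n). (i, n - m)) ys2))"
    unfolding norm_constr_def r ys1_def ys2_def m_def prune_dominated_def Let_def prod.case ..
  have m_le: "m \<le> n" if "n \<in> {k1, k2} \<union> snd ` set ys1 \<union> snd ` set ys2" for n
    unfolding m_def using that by (intro Min_le) auto
  have "m \<le> k1" "m \<le> k2" "\<forall>(i, n)\<in>set ys1. m \<le> n" "\<forall>(i, n)\<in>set ys2. m \<le> n"
    by (auto intro!: m_le simp: rev_image_eqI)
  then have "lvl_eval \<sigma> (fst (norm_constr c)) + m = lvl_eval \<sigma> (to_level k1 ys1)"
    and "lvl_eval \<sigma> (snd (norm_constr c)) + m = lvl_eval \<sigma> (to_level k2 ys2)"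
    unfolding norm by (simp_all add: lvl_eval_to_level_shift)
  then have "lvl_eval \<sigma> (fst (norm_constr c)) = lvl_eval \<sigma> (snd (norm_constr c))
      \<longleftrightarrow> lvl_eval \<sigma> (to_level k1 ys1) = lvl_eval \<sigma> (to_level k2 ys2)"
    by (metis add_right_cancel)
  also have "\<dots> \<longleftrightarrow> lvl_eval \<sigma> (to_level k1 xs1) = lvl_eval \<sigma> (to_level k2 xs2)"
    unfolding ys1_def ys2_def by (rule lvl_eval_prune_dominated_iff[OF nf(1,3)])
  also have "\<dots> \<longleftrightarrow> lvl_eval \<sigma> (fst c) = lvl_eval \<sigma> (snd c)"
    using lvl_eq_imp_eval_eq[OF nf(2)] lvl_eq_imp_eval_eq[OF nf(4)] by simp
  finally show ?thesis .
qed

lemma subst_norm_constr_iff: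
  "subst \<theta> (fst (norm_constr c)) \<simeq> subst \<theta> (snd (norm_constr c))
    \<longleftrightarrow> subst \<theta> (fst c) \<simeq> subst \<theta> (snd c)"
  by (simp add: lvl_eq_iff_eval_eq lvl_eval_subst lvl_eval_norm_constr_iff)

theorem mainTheorem6:
  fixes C :: "('v::linorder) constr set" and \<theta> :: "'v \<Rightarrow> 'v lvl"
  assumes "infinite (UNIV :: 'v set)"
    and "finite C"
  shows "\<theta> \<Turnstile> C \<longleftrightarrow> \<theta> \<Turnstile> norm_constrs C"
  unfolding sat_def norm_constrs_def by (simp add: case_prod_beta subst_norm_constr_iff)

end
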